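(* Let $N,K\in\mathbb{Z}^+$ and $\mu_0\in[\frac1N,1]$ be such that $t=\mu_0N\in[N]$ and $N/t\in\mathbb{Z}^+$. Consider $K$ messages of $L$ bits each and $N$ databases each with storage capacity $\mu_0KL$ bits, and the following scheme: split each message $W_k$ into $N/t$ disjoint equal-size sub-messages $W_{k,1},\ldots,W_{k,N/t}$; split the databases into $N/t$ disjoint groups $\mathcal{N}_1,\ldots,\mathcal{N}_{N/t}$ of size $t$; store $\bigcup_{k\in[K]}W_{k,f}$ at every database of $\mathcal{N}_f$; to retrieve $W_\theta$, for each $f$ the user privately downloads $W_{\theta,f}$ from the $t$ databases of $\mathcal{N}_f$ using a capacity-achieving full-storage PIR scheme. This scheme is a private scheme achieving rate $$R=\left(1+\frac1t+\frac1{t^2}+\cdots+\frac1{t^{K-1}}\right)^{-1}.$$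
   Context: PIR setting: $K$ independent $L$-bit messages stored uncoded among $N$ non-colluding databases; a user wants message $W_\theta$ privately (no single database learns anything about $\theta$ from its query, answer and all stored data) and must decode it with zero error; rate $=L/D$ with $D$ the total number of downloaded bits. A full-storage PIR scheme is a PIR scheme where each of the participating databases stores all (sub-)messages; a capacity-achieving full-storage PIR scheme with $t$ databases and $K$ messages has rate $\left(1+\frac1t+\cdots+\frac1{t^{K-1}}\right)^{-1}$. *)

theory Defs
  imports "HOL-Probability.Probability"
begin

(* Nd databases (indices n < Nd), K messages (indices k < K), each L bits
   (a message vector is W :: nat => bool list, valid if length (W k) = L for k < K).
   store n W   : content stored at database n (type 'd)
   Q theta     : joint distribution of queries (q n is the query sent to database n),
                 depends only on the desired index theta and user randomness
   A n qn d    : answer (bit string) of database n on query qn with stored content d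
   Dec theta q ans : the user's decoder (sees the queries it sent and the answers). *)

definition valid_msgs :: "nat \<Rightarrow> nat \<Rightarrow> (nat \<Rightarrow> bool list) \<Rightarrow> bool" where
  "valid_msgs K L W \<longleftrightarrow> (\<forall>k<K. length (W k) = L)"

definition pir_correct ::
  "nat \<Rightarrow> nat \<Rightarrow> nat \<Rightarrow> (nat \<Rightarrow> (nat \<Rightarrow> bool list) \<Rightarrow> 'd)
   \<Rightarrow> (nat \<Rightarrow> (nat \<Rightarrow> 'q) pmf) \<Rightarrow> (nat \<Rightarrow> 'q \<Rightarrow> 'd \<Rightarrow> bool list)
   \<Rightarrow> (nat \<Rightarrow> (nat \<Rightarrow> 'q) \<Rightarrow> (nat \<Rightarrow> bool list) \<Rightarrow> bool list) \<Rightarrow> bool" where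
  "pir_correct Nd K L store Q A Dec \<longleftrightarrow>
     (\<forall>\<theta><K. \<forall>W. valid_msgs K L W \<longrightarrow>
        (\<forall>q\<in>set_pmf (Q \<theta>).
           Dec \<theta> (\<lambda>n. if n < Nd then q n else undefined)
                 (\<lambda>n. if n < Nd then A n (q n) (store n W) else []) = W \<theta>))"

(* privacy: for every realization of the messages, the joint law of
   (query, answer) seen by any single database does not depend on theta;
   together with independence of the messages from theta this is exactly
   "database n learns nothing about theta from its query, answer and data" *)
definition pir_private ::
  "nat \<Rightarrow> nat \<Rightarrow> nat \<Rightarrow> (nat \<Rightarrow> (nat \<Rightarrow> bool list) \<Rightarrow> 'd)
   \<Rightarrow> (nat \<Rightarrow> (nat \<Rightarrow> 'q) pmf) \<Rightarrow> (nat \<Rightarrow> 'q \<Rightarrow> 'd \<Rightarrow> bool list) \<Rightarrow> bool" where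
  "pir_private Nd K L store Q A \<longleftrightarrow>
     (\<forall>n<Nd. \<forall>W. valid_msgs K L W \<longrightarrow> (\<forall>\<theta><K. \<forall>\<theta>'<K.
        map_pmf (\<lambda>q. (q n, A n (q n) (store n W))) (Q \<theta>) =
        map_pmf (\<lambda>q. (q n, A n (q n) (store n W))) (Q \<theta>')))"

definition download ::
  "nat \<Rightarrow> (nat \<Rightarrow> (nat \<Rightarrow> bool list) \<Rightarrow> 'd)
   \<Rightarrow> (nat \<Rightarrow> (nat \<Rightarrow> 'q) pmf) \<Rightarrow> (nat \<Rightarrow> 'q \<Rightarrow> 'd \<Rightarrow> bool list)
   \<Rightarrow> nat \<Rightarrow> (nat \<Rightarrow> bool list) \<Rightarrow> real" where
  "download Nd store Q A \<theta> W =
     measure_pmf.expectation (Q \<theta>) (\<lambda>q. \<Sum>n<Nd. real (length (A n (q n) (store n W))))"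

(* the scheme achieves rate R = L / D (finite user randomness, so D is well defined) *)
definition pir_rate ::
  "nat \<Rightarrow> nat \<Rightarrow> nat \<Rightarrow> (nat \<Rightarrow> (nat \<Rightarrow> bool list) \<Rightarrow> 'd)
   \<Rightarrow> (nat \<Rightarrow> (nat \<Rightarrow> 'q) pmf) \<Rightarrow> (nat \<Rightarrow> 'q \<Rightarrow> 'd \<Rightarrow> bool list) \<Rightarrow> real \<Rightarrow> bool" where
  "pir_rate Nd K L store Q A R \<longleftrightarrow>
     (\<forall>\<theta><K. finite (set_pmf (Q \<theta>))) \<and>
     (\<forall>\<theta><K. \<forall>W. valid_msgs K L W \<longrightarrow> real L / download Nd store Q A \<theta> W = R)"

definition full_store :: "nat \<Rightarrow> (nat \<Rightarrow> bool list) \<Rightarrow> (nat \<Rightarrow> bool list)" where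
  "full_store n W = W"

(* capacity-achieving rate of full-storage PIR with t databases and K messages *)
definition cap_rate :: "nat \<Rightarrow> nat \<Rightarrow> real" where
  "cap_rate t K = inverse (\<Sum>i<K. 1 / real t ^ i)"

(* ---- The storage-constrained scheme of the corollary ----
   t databases per group, N div t groups, sub-message length m = L div (N div t).
   Database n belongs to group f = n div t (0-indexed), position n mod t. *)

definition sub_msg :: "nat \<Rightarrow> nat \<Rightarrow> (nat \<Rightarrow> bool list) \<Rightarrow> nat \<Rightarrow> bool list" where
  "sub_msg m f W k = take m (drop (f * m) (W k))"

definition split_store :: "nat \<Rightarrow> nat \<Rightarrow> nat \<Rightarrow> (nat \<Rightarrow> bool list) \<Rightarrow> (nat \<Rightarrow> bool list)" where
  "split_store t m n W = sub_msg m (n div t) W"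

(* independent runs of the full-storage scheme, one per group *)
definition split_query :: "nat \<Rightarrow> nat \<Rightarrow> (nat \<Rightarrow> (nat \<Rightarrow> 'q) pmf) \<Rightarrow> nat \<Rightarrow> (nat \<Rightarrow> 'q) pmf" where
  "split_query N t Q \<theta> =
     map_pmf (\<lambda>qs n. qs (n div t) (n mod t)) (Pi_pmf {..<N div t} undefined (\<lambda>f. Q \<theta>))"

definition split_answer :: "nat \<Rightarrow> (nat \<Rightarrow> 'q \<Rightarrow> (nat \<Rightarrow> bool list) \<Rightarrow> bool list)
   \<Rightarrow> nat \<Rightarrow> 'q \<Rightarrow> (nat \<Rightarrow> bool list) \<Rightarrow> bool list" where
  "split_answer t A n qn d = A (n mod t) qn d"

definition split_decode :: "nat \<Rightarrow> nat
   \<Rightarrow> (nat \<Rightarrow> (nat \<Rightarrow> 'q) \<Rightarrow> (nat \<Rightarrow> bool list) \<Rightarrow> bool list)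
   \<Rightarrow> nat \<Rightarrow> (nat \<Rightarrow> 'q) \<Rightarrow> (nat \<Rightarrow> bool list) \<Rightarrow> bool list" where
  "split_decode N t Dec \<theta> q ans =
     concat (map (\<lambda>f. Dec \<theta> (\<lambda>j. if j < t then q (f * t + j) else undefined)
                           (\<lambda>j. if j < t then ans (f * t + j) else []))
                 [0..<N div t])"

end

theory Submission
  imports Defs
begin

text \<open>
  Group f of t databases runs an independent copy of the full-storage scheme on the
  sub-messages W_{k,f}. A single database sees exactly what database n mod t sees in
  one such run, so privacy is inherited; concatenating the G = N/t decoded blocks gives
  W_\<theta>; and each block costs (L/G)/R downloaded bits, so the total download is L/R
  and the rate is again R.
\<close>

lemma concat_map_take_drop_chunks:
  "length xs = G * m \<Longrightarrow> concat (map (\<lambda>f. take m (drop (f * m) xs)) [0..<G]) = xs"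
proof (induction G arbitrary: xs)
  case 0
  then show ?case by simp
next
  case (Suc G)
  have "concat (map (\<lambda>f. take m (drop (f * m) xs)) [0..<Suc G])
      = take m xs @ concat (map (\<lambda>f. take m (drop (f * m) (drop m xs))) [0..<G])"
    by (simp only: map_upt_Suc) (simp add: add.commute)
  also have "\<dots> = xs"
    using Suc.IH[of "drop m xs"] Suc.prems by simp
  finally show ?case .
qed

lemma length_sub_msg:
  assumes "f < G" and "length (W k) = G * m"
  shows "length (sub_msg m f W k) = m"
proof -
  have "f * m + m \<le> G * m"
    using assms(1) by (metis Suc_leI add.commute mult_Suc mult_le_mono1)
  then show ?thesis
    using assms(2) by (simp add: sub_msg_def)
qed

lemma valid_msgs_sub_msg:
  assumes "valid_msgs K (G * m) W" and "f < G"
  shows "valid_msgs K m (sub_msg m f W)"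
  using assms length_sub_msg unfolding valid_msgs_def by blast

lemma block_index_less:
  fixes f j t :: nat
  assumes "f < G" and "j < t"
  shows "f * t + j < G * t"
proof -
  have "f * t + j < Suc f * t" using assms(2) by simp
  also have "\<dots> \<le> G * t" using assms(1) by (intro mult_le_mono1) simp
  finally show ?thesis .
qed

lemma sum_lessThan_mult_blocks:
  fixes h :: "nat \<Rightarrow> 'a::comm_monoid_add"
  shows "(\<Sum>n<G * t. h n) = (\<Sum>f<G. \<Sum>j<t. h (f * t + j))"
proof -
  have "sum h {f * t..<f * t + t} = (\<Sum>j<t. h (f * t + j))" for f
    using sum.shift_bounds_nat_ivl[of h 0 "f * t" t]
    by (simp add: add.commute lessThan_atLeast0)
  then show ?thesis
    using sum.nat_group[of h t G] by simp
qed

lemma mod_less_of_less_mult: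
  fixes n t :: nat
  assumes "n < G * t"
  shows "n mod t < t"
  using assms by (metis gr0I mod_less_divisor mult_0_right not_less0)

lemma split_query_component:
  assumes "f < G" and "j < t"
  shows "map_pmf (\<lambda>q. q (f * t + j)) (split_query (G * t) t Q \<theta>) = map_pmf (\<lambda>q. q j) (Q \<theta>)"
proof -
  have "map_pmf (\<lambda>q. q (f * t + j)) (split_query (G * t) t Q \<theta>)
      = map_pmf (\<lambda>q. q j) (map_pmf (\<lambda>qs. qs f) (Pi_pmf {..<G} undefined (\<lambda>f. Q \<theta>)))"
    using assms unfolding split_query_def by (simp add: map_pmf_comp)
  also have "\<dots> = map_pmf (\<lambda>q. q j) (Q \<theta>)"
    using assms by (simp add: Pi_pmf_component)
  finally show ?thesis .
qed

lemma finite_set_split_query: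
  assumes "finite (set_pmf (Q \<theta>))"
  shows "finite (set_pmf (split_query N t Q \<theta>))"
  unfolding split_query_def using assms
  by (auto simp: set_Pi_pmf intro!: finite_PiE_dflt)

lemma split_scheme_block_correct:
  assumes correct: "pir_correct t K m full_store Q A Dec" and "0 < t"
    and "\<theta> < K" and W: "valid_msgs K (G * m) W" and f: "f < G"
    and q: "q \<in> set_pmf (split_query (G * t) t Q \<theta>)"
  shows "Dec \<theta> (\<lambda>j. if j < t then q (f * t + j) else undefined)
           (\<lambda>j. if j < t then split_answer t A (f * t + j) (q (f * t + j))
                                (split_store t m (f * t + j) W) else [])
         = sub_msg m f W \<theta>"
proof -
  obtain qs where qs: "qs \<in> set_pmf (Pi_pmf {..<G} undefined (\<lambda>f. Q \<theta>))"
    and q_eq: "q = (\<lambda>n. qs (n div t) (n mod t))"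
    using q \<open>0 < t\<close> unfolding split_query_def by auto
  have "qs f \<in> set_pmf (Q \<theta>)"
    using qs f by (auto simp: set_Pi_pmf PiE_dflt_def)
  moreover have "(\<lambda>j. if j < t then q (f * t + j) else undefined) = (\<lambda>j. if j < t then qs f j else undefined)"
    and "(\<lambda>j. if j < t then split_answer t A (f * t + j) (q (f * t + j))
                                (split_store t m (f * t + j) W) else [])
       = (\<lambda>j. if j < t then A j (qs f j) (full_store j (sub_msg m f W)) else [])"
    by (auto simp: q_eq split_answer_def split_store_def full_store_def)
  ultimately show ?thesis
    using correct assms(3) valid_msgs_sub_msg[OF W f] unfolding pir_correct_def by simp
qed

lemma split_scheme_correct:
  assumes "pir_correct t K m full_store Q A Dec" and "0 < t"
  shows "pir_correct (G * t) K (G * m) (split_store t m) (split_query (G * t) t Q)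
           (split_answer t A) (split_decode (G * t) t Dec)"
  unfolding pir_correct_def
proof (intro allI impI ballI)
  fix \<theta> W q
  assume \<theta>: "\<theta> < K" and W: "valid_msgs K (G * m) W"
    and q: "q \<in> set_pmf (split_query (G * t) t Q \<theta>)"
  have "split_decode (G * t) t Dec \<theta> (\<lambda>n. if n < G * t then q n else undefined)
          (\<lambda>n. if n < G * t then split_answer t A n (q n) (split_store t m n W) else [])
      = concat (map (\<lambda>f. sub_msg m f W \<theta>) [0..<G])"
    unfolding split_decode_def
    using split_scheme_block_correct[OF assms \<theta> W _ q] block_index_less \<open>0 < t\<close>
    by (intro arg_cong[where f=concat] map_cong) (simp_all cong: if_cong)
  also have "\<dots> = W \<theta>"
    using W \<theta> unfolding sub_msg_def valid_msgs_def by (intro concat_map_take_drop_chunks) simp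
  finally show "split_decode (G * t) t Dec \<theta> (\<lambda>n. if n < G * t then q n else undefined)
          (\<lambda>n. if n < G * t then split_answer t A n (q n) (split_store t m n W) else []) = W \<theta>" .
qed

lemma split_scheme_view:
  assumes "n < G * t"
  shows "map_pmf (\<lambda>q. (q n, split_answer t A n (q n) (split_store t m n W))) (split_query (G * t) t Q \<theta>)
       = map_pmf (\<lambda>q. (q (n mod t), A (n mod t) (q (n mod t)) (full_store (n mod t) (sub_msg m (n div t) W))))
           (Q \<theta>)"
proof -
  have f: "n div t < G" and j: "n mod t < t"
    using assms by (simp_all add: less_mult_imp_div_less mod_less_of_less_mult)
  let ?view = "\<lambda>x. (x, A (n mod t) x (full_store (n mod t) (sub_msg m (n div t) W)))"
  have "map_pmf (\<lambda>q. (q n, split_answer t A n (q n) (split_store t m n W))) (split_query (G * t) t Q \<theta>)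
      = map_pmf ?view (map_pmf (\<lambda>q. q (n div t * t + n mod t)) (split_query (G * t) t Q \<theta>))"
    by (simp add: map_pmf_comp split_answer_def split_store_def full_store_def)
  also have "\<dots> = map_pmf ?view (map_pmf (\<lambda>q. q (n mod t)) (Q \<theta>))"
    using split_query_component[OF f j, of Q \<theta>] by simp
  finally show ?thesis
    by (simp add: map_pmf_comp)
qed

lemma split_scheme_private:
  assumes hiding: "pir_private t K m full_store Q A"
  shows "pir_private (G * t) K (G * m) (split_store t m) (split_query (G * t) t Q) (split_answer t A)"
  unfolding pir_private_def
proof (intro allI impI)
  fix n W \<theta> \<theta>'
  assume n: "n < G * t" and W: "valid_msgs K (G * m) W" and "\<theta> < K" "\<theta>' < K"
  have "n mod t < t" and "valid_msgs K m (sub_msg m (n div t) W)"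
    using n W by (simp_all add: mod_less_of_less_mult valid_msgs_sub_msg less_mult_imp_div_less)
  then show "map_pmf (\<lambda>q. (q n, split_answer t A n (q n) (split_store t m n W))) (split_query (G * t) t Q \<theta>)
      = map_pmf (\<lambda>q. (q n, split_answer t A n (q n) (split_store t m n W))) (split_query (G * t) t Q \<theta>')"
    using hiding \<open>\<theta> < K\<close> \<open>\<theta>' < K\<close> unfolding split_scheme_view[OF n] pir_private_def by blast
qed

lemma download_split_scheme:
  assumes "finite (set_pmf (Q \<theta>))"
  shows "download (G * t) (split_store t m) (split_query (G * t) t Q) (split_answer t A) \<theta> W
       = (\<Sum>f<G. download t full_store Q A \<theta> (sub_msg m f W))"
proof -
  let ?S = "split_query (G * t) t Q \<theta>"
  let ?len = "\<lambda>f j x. real (length (A j x (sub_msg m f W)))"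
  have fin: "finite (set_pmf ?S)"
    using assms by (rule finite_set_split_query)
  have "download (G * t) (split_store t m) (split_query (G * t) t Q) (split_answer t A) \<theta> W
      = measure_pmf.expectation ?S (\<lambda>q. \<Sum>f<G. \<Sum>j<t. ?len f j (q (f * t + j)))"
    unfolding download_def sum_lessThan_mult_blocks
    by (intro Bochner_Integration.integral_cong refl sum.cong)
      (simp add: split_answer_def split_store_def)
  also have "\<dots> = (\<Sum>f<G. \<Sum>j<t. measure_pmf.expectation ?S (\<lambda>q. ?len f j (q (f * t + j))))"
    by (simp add: integrable_measure_pmf_finite[OF fin])
  also have "\<dots> = (\<Sum>f<G. \<Sum>j<t. measure_pmf.expectation (Q \<theta>) (\<lambda>q. ?len f j (q j)))"
  proof (intro sum.cong refl)
    fix f j assume "f \<in> {..<G}" "j \<in> {..<t}"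
    then have "map_pmf (\<lambda>q. q (f * t + j)) ?S = map_pmf (\<lambda>q. q j) (Q \<theta>)"
      by (simp add: split_query_component)
    then have "measure_pmf.expectation (map_pmf (\<lambda>q. q (f * t + j)) ?S) (?len f j)
             = measure_pmf.expectation (map_pmf (\<lambda>q. q j) (Q \<theta>)) (?len f j)"
      by (rule arg_cong)
    then show "measure_pmf.expectation ?S (\<lambda>q. ?len f j (q (f * t + j)))
             = measure_pmf.expectation (Q \<theta>) (\<lambda>q. ?len f j (q j))"
      by (simp only: integral_map_pmf)
  qed
  also have "\<dots> = (\<Sum>f<G. download t full_store Q A \<theta> (sub_msg m f W))"
    unfolding download_def full_store_def
    by (simp add: integrable_measure_pmf_finite[OF assms])
  finally show ?thesis .
qed

lemma split_scheme_rate: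
  assumes rate: "pir_rate t K m full_store Q A R" and "R \<noteq> 0" and "0 < G"
  shows "pir_rate (G * t) K (G * m) (split_store t m) (split_query (G * t) t Q) (split_answer t A) R"
  unfolding pir_rate_def
proof (intro conjI allI impI)
  fix \<theta> assume "\<theta> < K"
  then show "finite (set_pmf (split_query (G * t) t Q \<theta>))"
    using rate unfolding pir_rate_def by (blast intro: finite_set_split_query)
next
  fix \<theta> W assume \<theta>: "\<theta> < K" and W: "valid_msgs K (G * m) W"
  have block_download: "download t full_store Q A \<theta> (sub_msg m f W) = real m / R"
    and m_nonzero: "m \<noteq> 0" if "f < G" for f
  proof -
    have "real m / download t full_store Q A \<theta> (sub_msg m f W) = R"
      using rate \<theta> valid_msgs_sub_msg[OF W that] unfolding pir_rate_def by blast
    with \<open>R \<noteq> 0\<close> show "download t full_store Q A \<theta> (sub_msg m f W) = real m / R" and "m \<noteq> 0"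
      by (auto simp: field_simps)
  qed
  have D: "download (G * t) (split_store t m) (split_query (G * t) t Q) (split_answer t A) \<theta> W
      = real G * (real m / R)"
    using rate \<theta> block_download unfolding pir_rate_def by (simp add: download_split_scheme)
  show "real (G * m) / download (G * t) (split_store t m) (split_query (G * t) t Q) (split_answer t A) \<theta> W = R"
    unfolding D using \<open>0 < G\<close> \<open>R \<noteq> 0\<close> m_nonzero[OF \<open>0 < G\<close>] by simp
qed

lemma cap_rate_pos:
  assumes "K \<ge> 1"
  shows "cap_rate t K > 0"
proof -
  have "(\<Sum>i<K. 1 / real t ^ i) \<ge> (\<Sum>i\<in>{0}. 1 / real t ^ i)"
    using assms by (intro sum_mono2) auto
  then show ?thesis
    unfolding cap_rate_def by simp
qed

lemma split_store_size:
  assumes "valid_msgs K (G * m) W" and "n < G * t"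
  shows "(\<Sum>k<K. real (length (split_store t m n W k))) = real K * real m"
proof -
  have "n div t < G"
    using assms(2) by (rule less_mult_imp_div_less)
  then have "length (split_store t m n W k) = m" if "k < K" for k
    using assms(1) that unfolding split_store_def valid_msgs_def by (simp add: length_sub_msg)
  then show ?thesis by simp
qed

theorem corollary1:
  fixes N K L t :: nat and \<mu>0 :: real
    and Q :: "nat \<Rightarrow> (nat \<Rightarrow> 'q) pmf"
    and A :: "nat \<Rightarrow> 'q \<Rightarrow> (nat \<Rightarrow> bool list) \<Rightarrow> bool list"
    and Dec :: "nat \<Rightarrow> (nat \<Rightarrow> 'q) \<Rightarrow> (nat \<Rightarrow> bool list) \<Rightarrow> bool list"
  assumes "N \<ge> 1" and "K \<ge> 1" and "L \<ge> 1"
    and "1 / real N \<le> \<mu>0" and "\<mu>0 \<le> 1"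
    and "real t = \<mu>0 * real N" and "1 \<le> t" and "t \<le> N" and "t dvd N"
    and "(N div t) dvd L"
    and "pir_correct t K (L div (N div t)) full_store Q A Dec"
    and "pir_private t K (L div (N div t)) full_store Q A"
    and "pir_rate t K (L div (N div t)) full_store Q A (cap_rate t K)"
  shows "(\<forall>W. valid_msgs K L W \<longrightarrow> (\<forall>n<N.
            (\<Sum>k<K. real (length (split_store t (L div (N div t)) n W k))) = \<mu>0 * real K * real L))
       \<and> pir_correct N K L (split_store t (L div (N div t)))
            (split_query N t Q) (split_answer t A) (split_decode N t Dec)
       \<and> pir_private N K L (split_store t (L div (N div t)))
            (split_query N t Q) (split_answer t A)
       \<and> pir_rate N K L (split_store t (L div (N div t)))
            (split_query N t Q) (split_answer t A) (cap_rate t K)"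
proof -
  define G m where "G = N div t" and "m = L div G"
  have N: "N = G * t" and L: "L = G * m"
    using \<open>t dvd N\<close> \<open>(N div t) dvd L\<close> unfolding G_def m_def by simp_all
  have "0 < G"
    using N \<open>N \<ge> 1\<close> by (simp add: nat_0_less_mult_iff)
  from assms(11-13) have correct: "pir_correct t K m full_store Q A Dec"
    and hiding: "pir_private t K m full_store Q A"
    and rate: "pir_rate t K m full_store Q A (cap_rate t K)"
    unfolding G_def[symmetric] m_def[symmetric] by simp_all
  have "cap_rate t K \<noteq> 0"
    using cap_rate_pos[OF \<open>K \<ge> 1\<close>, of t] by simp
  have storage: "\<mu>0 * real K * real L = real K * real m"
    using \<open>real t = \<mu>0 * real N\<close> \<open>1 \<le> t\<close> unfolding N L by (simp add: field_simps)
  show ?thesis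
    unfolding G_def[symmetric] m_def[symmetric] storage
    using split_store_size[of K G m _ _ t] split_scheme_correct[OF correct, of G]
      split_scheme_private[OF hiding, of G] split_scheme_rate[OF rate \<open>cap_rate t K \<noteq> 0\<close> \<open>0 < G\<close>]
      \<open>1 \<le> t\<close>
    unfolding N[symmetric] L[symmetric] by simp
qed

end
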